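(* Let $N=1$, assume (H-EL), (H-R), $e_*=+\infty$, and that $Q(s)\to-S\in(0,+\infty)$ and $sQ'(s)\to0$ as $s\to+\infty$. Let $(u_{0k})\subset\mathcal A$ with $u_{0k}\to+\infty$, let $u_k$ be the solution of $(P_{u_{0k}})$ with $\operatorname{supp}u_k=[-\bar r_k,\bar r_k]$. Then $\mu(u_{0k})\to+\infty$, $$u_{0k}^4\sim\tfrac{9|S|}{32}\mu(u_{0k})^2,\qquad \bar r_k^4\sim\tfrac{9}{8|S|}\mu(u_{0k})^2\quad(k\to\infty),$$ and $u_{0k}^{-1}u_k(\bar r_k y)\to1-y^2$ in $C^2_{loc}((-1,1))$.
   Context: Hypothesis (H-EL): $Q\in C^1((0,+\infty))$, $Q\equiv0$ on $(-\infty,0]$, $\inf Q>-\infty$, $Q(u)\sim Au^{1-m}$ as $u\to0^+$ with $A>0$, $1<m<3$, and $|sQ'(s)|\le CQ(s)$ for small $s>0$. $R(s)=Q(s)/s$. (H-R): $R'\ne0$ on $(0,\delta)\cup(\delta^{-1},\infty)$ for some $\delta\in(0,1)$. $e_*=+\infty$ means $R$ attains no minimum on $(0,\infty)$. $(P_{s})$: $-u''+Q'(u)=R(s)$ in $\{u>0\}$, $u(0)=s$, $u'(0)=0$. $\mathcal A=\{s>0: R'(s)<0,\ R(t)>R(s)\ \forall t\in(0,s)\}$; for $s\in\mathcal A$ the solution $u_s$ of $(P_s)$ is even with compact support $[-\bar r_s,\bar r_s]$, and $\mu(s)=2\int_0^{\bar r_s}u_s$ is its mass. *)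

theory Defs
  imports "HOL-Analysis.Analysis" "HOL-Library.Landau_Symbols"
begin

definition RR :: "(real \<Rightarrow> real) \<Rightarrow> real \<Rightarrow> real" where
  "RR Q s = Q s / s"

definition H_EL :: "(real \<Rightarrow> real) \<Rightarrow> (real \<Rightarrow> real) \<Rightarrow> real \<Rightarrow> real \<Rightarrow> bool" where
  "H_EL Q dQ A m \<longleftrightarrow>
     (\<forall>x>0. (Q has_real_derivative dQ x) (at x)) \<and> continuous_on {0<..} dQ \<and>
     (\<forall>x\<le>0. Q x = 0) \<and> bdd_below (range Q) \<and>
     A > 0 \<and> 1 < m \<and> m < 3 \<and>
     (Q \<sim>[at_right 0] (\<lambda>u. A * u powr (1 - m))) \<and>
     (\<exists>C \<epsilon>. \<epsilon> > 0 \<and> (\<forall>s. 0 < s \<and> s < \<epsilon> \<longrightarrow> \<bar>s * dQ s\<bar> \<le> C * Q s))"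

definition H_R :: "(real \<Rightarrow> real) \<Rightarrow> bool" where
  "H_R Q \<longleftrightarrow> (\<exists>\<delta>. 0 < \<delta> \<and> \<delta> < 1 \<and>
     (\<forall>s. (0 < s \<and> s < \<delta>) \<or> s > 1 / \<delta> \<longrightarrow> deriv (RR Q) s \<noteq> 0))"

definition e_star_infinite :: "(real \<Rightarrow> real) \<Rightarrow> bool" where
  "e_star_infinite Q \<longleftrightarrow> \<not> (\<exists>s>0. \<forall>t>0. RR Q s \<le> RR Q t)"

definition setA :: "(real \<Rightarrow> real) \<Rightarrow> real set" where
  "setA Q = {s. s > 0 \<and> deriv (RR Q) s < 0 \<and> (\<forall>t. 0 < t \<and> t < s \<longrightarrow> RR Q t > RR Q s)}"

definition solves_P :: "(real \<Rightarrow> real) \<Rightarrow> (real \<Rightarrow> real) \<Rightarrow> real \<Rightarrow> (real \<Rightarrow> real) \<Rightarrow> real \<Rightarrow> bool" where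
  "solves_P Q dQ s u r \<longleftrightarrow>
     r > 0 \<and> continuous_on UNIV u \<and>
     (\<forall>x. \<bar>x\<bar> < r \<longrightarrow> u x > 0) \<and> (\<forall>x. \<bar>x\<bar> \<ge> r \<longrightarrow> u x = 0) \<and>
     u 0 = s \<and>
     (\<exists>u'. u' 0 = 0 \<and>
        (\<forall>x. \<bar>x\<bar> < r \<longrightarrow> (u has_real_derivative u' x) (at x) \<and>
                             (u' has_real_derivative (dQ (u x) - RR Q s)) (at x)))"

definition mass :: "(real \<Rightarrow> real) \<Rightarrow> real \<Rightarrow> real" where
  "mass u r = 2 * integral {0..r} u"

end

theory Submission
  imports Defs
begin

text \<open>
  Write \<sigma> = -S and s = u_k(0). The first integral of (P_s) is u'^2 = 2 (Q(u) - R(s) u), and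
  s \<in> \<A> forces u' < 0 on (0, r_k); applied to u_k and to x \<mapsto> u_k(-x), this makes u_k
  unimodal with maximum s. As s \<rightarrow> \<infinity>, the hypotheses Q(t) \<rightarrow> \<sigma> and t Q'(t) \<rightarrow> 0 make
  Q(t) - R(s) t uniformly close to \<sigma> (1 - t/s) for t \<in> [d s, s]; there the slope of
  s \<surd>(1 - u/s) is close to a = \<surd>(\<sigma>/2). Below the level d s the speed |u'| is at least \<surd>q, where q > 0 bounds Q
  from below, so that part of the support has length at most d s / \<surd>q. Letting d \<rightarrow> 0
  gives r_k \<sim> s / a and u_k(r_k y) / s \<rightarrow> 1 - y^2 locally uniformly on (-1, 1); the first
  integral and the equation itself give the convergence of the first two derivatives.
  By dominated convergence the mass is (4/3) r_k s (1 + o(1)), and the asymptotic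
  equivalences follow by elimination.
\<close>

lemma continuous_on_first_zero:
  fixes f :: "real \<Rightarrow> real"
  assumes cont: "continuous_on {a..b} f" and "a \<le> b" and fa: "f a < 0" and fb: "f b \<ge> 0"
  obtains z where "a < z" "z \<le> b" "f z = 0" "\<And>y. a \<le> y \<Longrightarrow> y < z \<Longrightarrow> f y < 0"
proof -
  define T where "T = {a..b} \<inter> f -` {0..}"
  have "closed T"
    unfolding T_def by (rule continuous_closed_preimage[OF cont]) auto
  hence "compact T"
    unfolding T_def by (simp add: compact_eq_bounded_closed bounded_Int)
  moreover have "T \<noteq> {}" using fb \<open>a \<le> b\<close> unfolding T_def by auto
  ultimately obtain z where zT: "z \<in> T" and zmin: "\<And>y. y \<in> T \<Longrightarrow> z \<le> y"
    by (meson compact_attains_inf)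
  have z: "a \<le> z" "z \<le> b" "f z \<ge> 0" using zT unfolding T_def by auto
  have below: "f y < 0" if "a \<le> y" "y < z" for y
  proof (rule ccontr)
    assume "\<not> f y < 0"
    hence "y \<in> T" using that z unfolding T_def by auto
    thus False using zmin[of y] that by simp
  qed
  have "a < z" using fa z by (cases "a = z") auto
  moreover have "f z = 0"
  proof -
    obtain y where y: "a \<le> y" "y \<le> z" "f y = 0"
      using IVT'[of f a 0 z] fa z continuous_on_subset[OF cont, of "{a..z}"] by auto
    have "y = z"
    proof (rule ccontr)
      assume "y \<noteq> z"
      hence "f y < 0" using below[of y] y by simp
      thus False using y by simp
    qed
    thus ?thesis using y by simp
  qed
  ultimately show ?thesis using that z(2) below by blast
qed

lemma abs_sub_le_of_abs_square_sub_le: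
  fixes p a c :: real
  assumes "0 \<le> p" "0 < a" "\<bar>p\<^sup>2 - a\<^sup>2\<bar> \<le> c"
  shows "\<bar>p - a\<bar> \<le> c / a"
proof -
  have "p\<^sup>2 - a\<^sup>2 = (p - a) * (p + a)"
    by (simp add: power2_eq_square algebra_simps)
  hence "\<bar>p\<^sup>2 - a\<^sup>2\<bar> = \<bar>p - a\<bar> * (p + a)"
    using assms by (simp add: abs_mult)
  hence "\<bar>p - a\<bar> * a \<le> c"
    using assms by (smt (verit) mult_left_mono abs_ge_zero)
  thus ?thesis using assms by (simp add: le_divide_eq)
qed

lemma real_sqrt_diff_le_sqrt_abs:
  fixes x y :: real
  assumes "0 \<le> x" "0 \<le> y"
  shows "\<bar>sqrt x - sqrt y\<bar> \<le> sqrt \<bar>x - y\<bar>"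
proof -
  have *: "\<bar>sqrt x - sqrt y\<bar> \<le> sqrt \<bar>x - y\<bar>" if "0 \<le> y" "y \<le> x" for x y :: real
  proof -
    have "sqrt x = sqrt (y + (x - y))" by simp
    also have "\<dots> \<le> sqrt y + sqrt (x - y)" using that by (intro sqrt_add_le_add_sqrt) auto
    finally have "sqrt x - sqrt y \<le> sqrt (x - y)" by simp
    moreover have "sqrt y \<le> sqrt x" using that by simp
    ultimately show ?thesis using that by simp
  qed
  show ?thesis
    using *[of y x] *[of x y] assms by (cases "y \<le> x") (simp_all add: abs_minus_commute)
qed

lemma uniform_limit_sqrt:
  fixes f :: "'a \<Rightarrow> 'b \<Rightarrow> real"
  assumes ul: "uniform_limit S f g F"
    and f0: "\<And>k y. y \<in> S \<Longrightarrow> f k y \<ge> 0" and g0: "\<And>y. y \<in> S \<Longrightarrow> g y \<ge> 0"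
  shows "uniform_limit S (\<lambda>k y. sqrt (f k y)) (\<lambda>y. sqrt (g y)) F"
proof (rule uniform_limitI)
  fix e :: real assume e: "e > 0"
  have "\<forall>\<^sub>F k in F. \<forall>y\<in>S. dist (f k y) (g y) < e\<^sup>2"
    using uniform_limitD[OF ul] e by simp
  thus "\<forall>\<^sub>F k in F. \<forall>y\<in>S. dist (sqrt (f k y)) (sqrt (g y)) < e"
  proof (rule eventually_mono, intro ballI)
    fix k y assume H: "\<forall>y\<in>S. dist (f k y) (g y) < e\<^sup>2" and y: "y \<in> S"
    have "\<bar>sqrt (f k y) - sqrt (g y)\<bar> \<le> sqrt \<bar>f k y - g y\<bar>"
      using f0[OF y] g0[OF y] by (rule real_sqrt_diff_le_sqrt_abs)
    also have "\<dots> < sqrt (e\<^sup>2)" using H y by (intro real_sqrt_less_mono) (simp add: dist_real_def)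
    finally show "dist (sqrt (f k y)) (sqrt (g y)) < e" using e by (simp add: dist_real_def)
  qed
qed

lemma LIMSEQ_squeeze_at_right:
  fixes X :: "nat \<Rightarrow> real" and lo hi :: "real \<Rightarrow> real"
  assumes "d0 > 0"
    and bounds: "\<And>d. 0 < d \<Longrightarrow> d < d0 \<Longrightarrow> \<forall>\<^sub>F k in sequentially. lo d \<le> X k \<and> X k \<le> hi d"
    and lo: "(lo \<longlongrightarrow> L) (at_right 0)" and hi: "(hi \<longlongrightarrow> L) (at_right 0)"
  shows "X \<longlonglongrightarrow> L"
proof (rule tendstoI)
  fix e :: real assume "e > 0"
  obtain b where "b > 0" and b: "\<And>d. 0 < d \<Longrightarrow> d < b \<Longrightarrow> dist (lo d) L < e \<and> dist (hi d) L < e"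
    using eventually_conj[OF tendstoD[OF lo \<open>e > 0\<close>] tendstoD[OF hi \<open>e > 0\<close>]]
    unfolding eventually_at_right_field by auto
  define d where "d = min (b/2) (d0/2)"
  have d: "0 < d" "d < b" "d < d0" using \<open>b > 0\<close> \<open>d0 > 0\<close> unfolding d_def by auto
  show "\<forall>\<^sub>F k in sequentially. dist (X k) L < e"
    using bounds[OF d(1,3)]
  proof eventually_elim
    case (elim k)
    thus ?case using b[OF d(1,2)] by (simp add: dist_real_def abs_less_iff)
  qed
qed

lemma integral_one_minus_square: "integral {0..1} (\<lambda>y::real. 1 - y\<^sup>2) = 2/3"
proof -
  have "((\<lambda>y::real. 1 - y\<^sup>2) has_integral (1 - 1^3/3) - (0 - 0^3/3)) {0..1}"
  proof (rule fundamental_theorem_of_calculus)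
    fix x :: real assume "x \<in> {0..1}"
    show "((\<lambda>y. y - y^3/3) has_vector_derivative (1 - x\<^sup>2)) (at x within {0..1})"
      unfolding has_real_derivative_iff_has_vector_derivative[symmetric]
      by (auto intro!: derivative_eq_intros simp: power2_eq_square)
  qed simp
  thus ?thesis by (simp add: integral_unique)
qed

lemma uniform_limit_tendsto_const:
  assumes "(X \<longlongrightarrow> L) F"
  shows "uniform_limit S (\<lambda>k y. X k) (\<lambda>y. L) F"
proof (rule uniform_limitI)
  fix e :: real assume "e > 0"
  from tendstoD[OF assms this] show "\<forall>\<^sub>F k in F. \<forall>y\<in>S. dist (X k) L < e"
    by eventually_elim simp
qed

lemma compact_subset_symmetric_interval:
  fixes K :: "real set"
  assumes "compact K" "K \<subseteq> {-1<..<1}"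
  obtains \<rho> where "0 \<le> \<rho>" "\<rho> < 1" "K \<subseteq> {-\<rho>..\<rho>}"
proof (cases "K = {}")
  case True thus ?thesis using that[of 0] by simp
next
  case False
  have "compact (abs ` K)" using assms(1) by (intro compact_continuous_image continuous_intros)
  then obtain x where "x \<in> K" and x: "\<And>y. y \<in> K \<Longrightarrow> \<bar>y\<bar> \<le> \<bar>x\<bar>"
    using compact_attains_sup[of "abs ` K"] False by auto
  moreover have "x \<in> {-1<..<1}" using \<open>x \<in> K\<close> assms(2) by blast
  hence "\<bar>x\<bar> < 1" by auto
  ultimately show ?thesis using that[of "\<bar>x\<bar>"] by force
qed

section \<open>Positive solutions of (P_s) for s in \<A>\<close>

definition potential :: "(real \<Rightarrow> real) \<Rightarrow> real \<Rightarrow> real \<Rightarrow> real" where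
  "potential Q s t = Q t - t * RR Q s"

lemma RR_has_real_derivative:
  assumes "(Q has_real_derivative q') (at s)" "s \<noteq> 0"
  shows "(RR Q has_real_derivative (q' * s - Q s) / s\<^sup>2) (at s)"
proof -
  have "((\<lambda>s. Q s / s) has_real_derivative (q' * s - Q s * 1) / (s * s)) (at s)"
    using assms by (intro DERIV_divide DERIV_ident) auto
  thus ?thesis unfolding RR_def by (simp add: power2_eq_square)
qed

lemma setA_potential_pos:
  assumes "s \<in> setA Q" "0 < t" "t < s"
  shows "potential Q s t > 0"
proof -
  have "Q t / t > RR Q s" using assms unfolding setA_def RR_def by auto
  thus ?thesis using assms(2) unfolding potential_def by (simp add: field_simps)
qed

lemma setA_deriv_lt_RR:
  assumes "(Q has_real_derivative q') (at s)" "s \<in> setA Q"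
  shows "q' < RR Q s"
proof -
  have s: "s > 0" and "deriv (RR Q) s < 0" using assms(2) unfolding setA_def by auto
  moreover have "deriv (RR Q) s = (q' * s - Q s) / s\<^sup>2"
    using RR_has_real_derivative[OF assms(1)] s by (intro DERIV_imp_deriv) auto
  ultimately have "q' * s < Q s" by (simp add: divide_less_0_iff)
  thus ?thesis using s unfolding RR_def by (simp add: field_simps)
qed

lemma solves_P_derivE:
  assumes "solves_P Q dQ s v r"
  obtains v' where "v' 0 = 0"
    "\<And>x. \<bar>x\<bar> < r \<Longrightarrow> (v has_real_derivative v' x) (at x)"
    "\<And>x. \<bar>x\<bar> < r \<Longrightarrow> (v' has_real_derivative dQ (v x) - RR Q s) (at x)"
  using assms unfolding solves_P_def by blast

lemma first_integral:
  fixes v v' :: "real \<Rightarrow> real"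
  assumes D: "\<forall>x>0. (Q has_real_derivative dQ x) (at x)"
    and pos: "\<And>x. \<bar>x\<bar> < r \<Longrightarrow> v x > 0"
    and Dv: "\<And>x. \<bar>x\<bar> < r \<Longrightarrow> (v has_real_derivative v' x) (at x)"
    and Dv': "\<And>x. \<bar>x\<bar> < r \<Longrightarrow> (v' has_real_derivative dQ (v x) - c) (at x)"
    and x: "\<bar>x\<bar> < r"
  shows "(v' x)\<^sup>2 / 2 - Q (v x) + c * v x = (v' 0)\<^sup>2 / 2 - Q (v 0) + c * v 0"
proof (rule DERIV_isconst3[where f = "\<lambda>x. (v' x)\<^sup>2 / 2 - Q (v x) + c * v x"])
  show "-r < r" "x \<in> {-r<..<r}" "0 \<in> {-r<..<r}" using x by auto
  fix y :: real assume "y \<in> {-r<..<r}"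
  hence y: "\<bar>y\<bar> < r" by auto
  have "((\<lambda>x. Q (v x)) has_real_derivative dQ (v y) * v' y) (at y)"
    using DERIV_chain2[OF D[rule_format, OF pos[OF y]] Dv[OF y]] .
  hence "((\<lambda>x. (v' x)\<^sup>2 / 2 - Q (v x) + c * v x) has_real_derivative
      (2 * v' y * (dQ (v y) - c)) / 2 - dQ (v y) * v' y + c * v' y) (at y)"
    using Dv'[OF y] Dv[OF y] by (auto intro!: derivative_eq_intros simp: power2_eq_square)
  moreover have "2 * v' y * (dQ (v y) - c) / 2 - dQ (v y) * v' y + c * v' y = 0"
    by (simp add: field_simps)
  ultimately show "((\<lambda>x. (v' x)\<^sup>2 / 2 - Q (v x) + c * v x) has_real_derivative 0) (at y)"
    by simp
qed

lemma solves_P_energy: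
  assumes D: "\<forall>x>0. (Q has_real_derivative dQ x) (at x)" and s: "s > 0"
    and sol: "solves_P Q dQ s v r" and v'0: "v' 0 = 0"
    and Dv: "\<And>x. \<bar>x\<bar> < r \<Longrightarrow> (v has_real_derivative v' x) (at x)"
    and Dv': "\<And>x. \<bar>x\<bar> < r \<Longrightarrow> (v' has_real_derivative dQ (v x) - RR Q s) (at x)"
    and x: "\<bar>x\<bar> < r"
  shows "(v' x)\<^sup>2 = 2 * potential Q s (v x)"
proof -
  have "v 0 = s" "\<And>x. \<bar>x\<bar> < r \<Longrightarrow> v x > 0" using sol unfolding solves_P_def by auto
  with first_integral[OF D _ Dv Dv' x] v'0 s
  show ?thesis by (simp add: potential_def RR_def field_simps)
qed

lemma setA_solution_deriv_neg_near_0: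
  assumes D: "\<forall>x>0. (Q has_real_derivative dQ x) (at x)" and sA: "s \<in> setA Q"
    and sol: "solves_P Q dQ s v r" and v'0: "v' 0 = 0"
    and Dv': "\<And>x. \<bar>x\<bar> < r \<Longrightarrow> (v' has_real_derivative dQ (v x) - RR Q s) (at x)"
  obtains d where "d > 0" "\<And>h. 0 < h \<Longrightarrow> h < d \<Longrightarrow> v' h < 0"
proof -
  have s: "s > 0" using sA unfolding setA_def by auto
  have "v 0 = s" "r > 0" using sol unfolding solves_P_def by auto
  hence "dQ (v 0) - RR Q s < 0" "\<bar>0\<bar> < r"
    using setA_deriv_lt_RR[OF D[rule_format, OF s] sA] by auto
  then obtain d where "d > 0" and "\<forall>h>0. h < d \<longrightarrow> v' (0 + h) < v' 0"
    using DERIV_neg_dec_right[OF Dv'] by blast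
  thus ?thesis using that v'0 by simp
qed

lemma setA_solution_deriv_neg:
  assumes D: "\<forall>x>0. (Q has_real_derivative dQ x) (at x)" and sA: "s \<in> setA Q"
    and sol: "solves_P Q dQ s v r" and v'0: "v' 0 = 0"
    and Dv: "\<And>x. \<bar>x\<bar> < r \<Longrightarrow> (v has_real_derivative v' x) (at x)"
    and Dv': "\<And>x. \<bar>x\<bar> < r \<Longrightarrow> (v' has_real_derivative dQ (v x) - RR Q s) (at x)"
    and x: "0 < x" "x < r"
  shows "v' x < 0"
proof (rule ccontr)
  assume "\<not> v' x < 0"
  have s: "s > 0" using sA unfolding setA_def by auto
  have v0: "v 0 = s" and pos: "\<And>x. \<bar>x\<bar> < r \<Longrightarrow> v x > 0"
    using sol unfolding solves_P_def by auto
  obtain d where "d > 0" and d: "\<And>h. 0 < h \<Longrightarrow> h < d \<Longrightarrow> v' h < 0"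
    using setA_solution_deriv_neg_near_0[OF D sA sol v'0 Dv'] by blast
  define e where "e = min (x/2) (d/2)"
  have e: "0 < e" "e < x" "e < d" using x \<open>d > 0\<close> unfolding e_def by auto
  have "continuous_on {e..x} v'"
    using x e by (intro continuous_at_imp_continuous_on ballI DERIV_isCont[OF Dv']) auto
  then obtain z where z: "e < z" "z \<le> x" "v' z = 0" and below: "\<And>y. e \<le> y \<Longrightarrow> y < z \<Longrightarrow> v' y < 0"
    using continuous_on_first_zero e d[of e] \<open>\<not> v' x < 0\<close> by (metis less_imp_le not_less)
  have "v z < v 0"
  proof (rule DERIV_neg_imp_decreasing_open[where f = v])
    show "0 < z" using e z by simp
    show "continuous_on {0..z} v"
      using x z by (intro continuous_at_imp_continuous_on ballI DERIV_isCont[OF Dv]) auto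
    fix y assume y: "0 < y" "y < z"
    hence "v' y < 0" "\<bar>y\<bar> < r" using d[of y] below[of y] e z x by (cases "y < e"; simp)+
    thus "\<exists>l. (v has_real_derivative l) (at y) \<and> l < 0" using Dv by blast
  qed
  moreover have "\<bar>z\<bar> < r" "0 < z" using z x e by auto
  ultimately have "potential Q s (v z) > 0"
    using setA_potential_pos[OF sA] pos v0 by simp
  moreover have "(v' z)\<^sup>2 = 2 * potential Q s (v z)"
    using solves_P_energy[OF D s sol v'0 Dv Dv'] \<open>\<bar>z\<bar> < r\<close> by simp
  ultimately show False using z by simp
qed

lemma setA_solution_profile:
  assumes D: "\<forall>x>0. (Q has_real_derivative dQ x) (at x)" and sA: "s \<in> setA Q"
    and sol: "solves_P Q dQ s v r"
  obtains v' where "v' 0 = 0"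
    "\<And>x. \<bar>x\<bar> < r \<Longrightarrow> (v has_real_derivative v' x) (at x)"
    "\<And>x. \<bar>x\<bar> < r \<Longrightarrow> (v' has_real_derivative dQ (v x) - RR Q s) (at x)"
    "\<And>x. \<bar>x\<bar> < r \<Longrightarrow> (v' x)\<^sup>2 = 2 * potential Q s (v x)"
    "\<And>x. 0 < x \<Longrightarrow> x < r \<Longrightarrow> v' x < 0"
proof -
  have s: "s > 0" using sA unfolding setA_def by auto
  obtain v' where v': "v' 0 = 0"
    "\<And>x. \<bar>x\<bar> < r \<Longrightarrow> (v has_real_derivative v' x) (at x)"
    "\<And>x. \<bar>x\<bar> < r \<Longrightarrow> (v' has_real_derivative dQ (v x) - RR Q s) (at x)"
    using solves_P_derivE[OF sol] by blast
  show ?thesis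
    using that[OF v' solves_P_energy[OF D s sol v'] setA_solution_deriv_neg[OF D sA sol v']] .
qed

lemma solves_P_reflect:
  assumes sol: "solves_P Q dQ s v r"
  shows "solves_P Q dQ s (\<lambda>x. v (-x)) r"
proof -
  obtain v' where v'0: "v' 0 = 0" and Dv: "\<And>x. \<bar>x\<bar> < r \<Longrightarrow> (v has_real_derivative v' x) (at x)"
    and Dv': "\<And>x. \<bar>x\<bar> < r \<Longrightarrow> (v' has_real_derivative dQ (v x) - RR Q s) (at x)"
    using solves_P_derivE[OF sol] by blast
  have "continuous_on UNIV v" using sol unfolding solves_P_def by simp
  hence "continuous_on UNIV (\<lambda>x. v (-x))"
    by (rule continuous_on_compose2) (auto intro: continuous_intros)
  moreover have "((\<lambda>x. v (-x)) has_real_derivative - v' (-x)) (at x) \<and>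
      ((\<lambda>x. - v' (-x)) has_real_derivative dQ (v (-x)) - RR Q s) (at x)" if "\<bar>x\<bar> < r" for x
  proof
    show "((\<lambda>x. v (-x)) has_real_derivative - v' (-x)) (at x)"
      using Dv[of "-x"] that DERIV_mirror[where f=v and x=x and y="v' (-x)"] by simp
    have "((\<lambda>x. v' (-x)) has_real_derivative - (dQ (v (-x)) - RR Q s)) (at x)"
      using Dv'[of "-x"] that DERIV_mirror[where f=v' and x=x] by simp
    from DERIV_minus[OF this] show "((\<lambda>x. - v' (-x)) has_real_derivative dQ (v (-x)) - RR Q s) (at x)"
      by simp
  qed
  moreover have "r > 0" "\<forall>x. \<bar>x\<bar> < r \<longrightarrow> v (-x) > 0" "\<forall>x. \<bar>x\<bar> \<ge> r \<longrightarrow> v (-x) = 0" "v (-0) = s"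
    using sol unfolding solves_P_def by auto
  moreover have "- v' (-0) = 0" using v'0 by simp
  ultimately show ?thesis
    unfolding solves_P_def by (intro conjI exI[of _ "\<lambda>x. - v' (-x)"]; blast)
qed

lemma potential_near_linear:
  fixes Q dQ :: "real \<Rightarrow> real"
  assumes D: "\<forall>x>0. (Q has_real_derivative dQ x) (at x)"
    and s: "s > 0" and d: "d > 0" and Qs: "\<bar>Q s - \<sigma>\<bar> \<le> d/2"
    and sdQ: "\<And>t. t \<ge> d * s \<Longrightarrow> \<bar>t * dQ t\<bar> \<le> d\<^sup>2/2"
    and t: "d * s \<le> t" "t \<le> s"
  shows "\<bar>potential Q s t - \<sigma> * (1 - t/s)\<bar> \<le> d * (1 - t/s)"
proof -
  have "\<bar>dQ z\<bar> \<le> d / (2 * s)" if "z \<in> {t..s}" for z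
  proof -
    have "0 < d * s" using d s by simp
    hence z: "z \<ge> d * s" "z > 0" using that t by auto
    have "z * \<bar>dQ z\<bar> \<le> d\<^sup>2/2" using sdQ[OF z(1)] z(2) by (simp add: abs_mult)
    also have "\<dots> \<le> z * (d / (2 * s))"
      using z(1) d s by (simp add: power2_eq_square field_simps mult_right_mono)
    finally show ?thesis using z(2) by (simp only: mult_le_cancel_left_pos)
  qed
  hence "norm (Q s - Q t) \<le> d / (2 * s) * norm (s - t)"
    using t d s
    by (intro field_differentiable_bound[of "{t..s}" Q dQ])
       (auto intro!: has_field_derivative_at_within D[rule_format] intro: order_less_le_trans[OF mult_pos_pos])
  hence QQ: "\<bar>Q t - Q s\<bar> \<le> d/2 * (1 - t/s)"
    using t s by (simp add: abs_minus_commute field_simps)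
  have nn: "0 \<le> 1 - t/s" using t s by simp
  have "\<bar>(1 - t/s) * (Q s - \<sigma>)\<bar> = \<bar>Q s - \<sigma>\<bar> * (1 - t/s)" using nn by (simp add: abs_mult)
  also have "\<dots> \<le> d/2 * (1 - t/s)" using Qs nn by (rule mult_right_mono)
  finally have Qsig: "\<bar>(1 - t/s) * (Q s - \<sigma>)\<bar> \<le> d/2 * (1 - t/s)" .
  have eq: "potential Q s t - \<sigma> * (1 - t/s) = (Q t - Q s) + (1 - t/s) * (Q s - \<sigma>)"
    using s by (simp add: potential_def RR_def field_simps)
  have "\<bar>potential Q s t - \<sigma> * (1 - t/s)\<bar> \<le> d/2 * (1 - t/s) + d/2 * (1 - t/s)"
    unfolding eq by (rule order_trans[OF abs_triangle_ineq add_mono[OF QQ Qsig]])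
  thus ?thesis by simp
qed

section \<open>A positive lower bound for Q\<close>

lemma asymp_equiv_powr_eventually_ge:
  fixes Q :: "real \<Rightarrow> real"
  assumes asy: "Q \<sim>[at_right 0] (\<lambda>u. A * u powr (1 - m))" and A: "A > 0" and m: "m > 1"
  shows "\<forall>\<^sub>F t in at_right 0. Q t \<ge> A / 2"
proof -
  let ?f = "\<lambda>u::real. A * u powr (1 - m)"
  have "((\<lambda>t. if Q t = 0 \<and> ?f t = 0 then 1 else Q t / ?f t) \<longlongrightarrow> 1) (at_right 0)"
    using asymp_equivD[OF asy] .
  hence "\<forall>\<^sub>F t in at_right 0. (if Q t = 0 \<and> ?f t = 0 then 1 else Q t / ?f t) > 1/2"
    by (intro order_tendstoD) auto
  moreover have "\<forall>\<^sub>F t in at_right 0. 0 < t \<and> t < (1::real)"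
    unfolding eventually_at_right_field by (intro exI[of _ 1]) auto
  ultimately show ?thesis
  proof eventually_elim
    case (elim t)
    have "t powr 0 \<le> t powr (1 - m)"
      by (rule powr_mono') (use elim m in auto)
    hence "1 \<le> t powr (1 - m)" using elim by simp
    hence f: "A \<le> ?f t" using A by (simp add: mult_le_cancel_left1)
    hence "Q t / ?f t > 1/2" using elim A by (auto split: if_splits)
    hence "Q t > ?f t / 2" using f A by (simp add: field_simps)
    thus ?case using f by simp
  qed
qed

lemma continuous_on_positive_lower_bound:
  fixes Q :: "real \<Rightarrow> real"
  assumes cont: "continuous_on {0<..} Q" and pos: "\<And>t. t > 0 \<Longrightarrow> Q t > 0" and "c > 0"
    and near0: "\<forall>\<^sub>F t in at_right 0. Q t \<ge> c" and infty: "\<forall>\<^sub>F t in at_top. Q t \<ge> c"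
  obtains q where "q > 0" "\<And>t. t > 0 \<Longrightarrow> q \<le> Q t"
proof -
  obtain e where "e > 0" and e: "\<And>t. 0 < t \<Longrightarrow> t < e \<Longrightarrow> Q t \<ge> c"
    using near0 unfolding eventually_at_right_field by auto
  obtain M where M: "\<And>t. t \<ge> M \<Longrightarrow> Q t \<ge> c"
    using infty unfolding eventually_at_top_linorder by auto
  have "continuous_on {e/2..max M e} Q"
    using cont by (rule continuous_on_subset) (use \<open>e > 0\<close> in auto)
  moreover have "{e/2..max M e} \<noteq> {}" using \<open>e > 0\<close> by auto
  ultimately obtain x where x: "x \<in> {e/2..max M e}" and xmin: "\<And>y. y \<in> {e/2..max M e} \<Longrightarrow> Q x \<le> Q y"
    using continuous_attains_inf[OF compact_Icc] by metis
  have "Q x > 0" using pos x \<open>e > 0\<close> by auto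
  show ?thesis
  proof (rule that[of "min c (Q x)"])
    show "min c (Q x) > 0" using \<open>c > 0\<close> \<open>Q x > 0\<close> by simp
    fix t :: real assume "t > 0"
    have "t < e \<or> t \<ge> M \<or> t \<in> {e/2..max M e}" using \<open>e > 0\<close> by auto
    thus "min c (Q x) \<le> Q t"
      using e[OF \<open>t > 0\<close>] M xmin by fastforce
  qed
qed

lemma setA_sequence_Q_pos:
  assumes A: "\<And>k. u0 k \<in> setA Q" and lim: "filterlim u0 at_top sequentially"
    and Qlim: "(Q \<longlongrightarrow> \<sigma>) at_top" and "\<sigma> > 0" and t: "t > 0"
  shows "Q t > 0"
proof -
  have "\<forall>\<^sub>F k in sequentially. Q (u0 k) > 0 \<and> u0 k > t"
    using order_tendstoD(1)[OF filterlim_compose[OF Qlim lim] \<open>\<sigma> > 0\<close>]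
      filterlim_at_top_dense[THEN iffD1, OF lim]
    by (intro eventually_conj) auto
  then obtain k where k: "Q (u0 k) > 0" "u0 k > t" by (auto simp: eventually_sequentially)
  have "RR Q t > RR Q (u0 k)" using A[of k] k t unfolding setA_def by auto
  moreover have "RR Q (u0 k) > 0" using k t unfolding RR_def by simp
  ultimately have "Q t / t > 0" unfolding RR_def by linarith
  thus ?thesis using t by (simp add: zero_less_divide_iff)
qed

lemma H_EL_Q_lower_bound:
  assumes H: "H_EL Q dQ A m" and Qlim: "(Q \<longlongrightarrow> \<sigma>) at_top" and "\<sigma> > 0"
    and pos: "\<And>t. t > 0 \<Longrightarrow> Q t > 0"
  obtains q where "q > 0" "\<And>t. t > 0 \<Longrightarrow> q \<le> Q t"
proof -
  have D: "\<forall>x>0. (Q has_real_derivative dQ x) (at x)" and "A > 0" "m > 1"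
    and asy: "Q \<sim>[at_right 0] (\<lambda>u. A * u powr (1 - m))"
    using H unfolding H_EL_def by auto
  have cont: "continuous_on {0<..} Q"
    by (intro continuous_at_imp_continuous_on ballI DERIV_isCont[of Q "dQ _"]) (use D in auto)
  have c: "min (A / 2) (\<sigma> / 2) > 0" using \<open>A > 0\<close> \<open>\<sigma> > 0\<close> by simp
  have near0: "\<forall>\<^sub>F t in at_right 0. Q t \<ge> min (A / 2) (\<sigma> / 2)"
    using asymp_equiv_powr_eventually_ge[OF asy \<open>A > 0\<close> \<open>m > 1\<close>] by eventually_elim simp
  have "\<forall>\<^sub>F t in at_top. \<sigma> / 2 < Q t"
    using order_tendstoD(1)[OF Qlim, of "\<sigma> / 2"] \<open>\<sigma> > 0\<close> by simp
  hence infty: "\<forall>\<^sub>F t in at_top. Q t \<ge> min (A / 2) (\<sigma> / 2)"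
    by eventually_elim simp
  show ?thesis
    using continuous_on_positive_lower_bound[OF cont pos c near0 infty] that by blast
qed

section \<open>Solutions with amplitude tending to infinity\<close>

locale large_amplitude_family =
  fixes Q dQ :: "real \<Rightarrow> real" and \<sigma> q :: real and u0 :: "nat \<Rightarrow> real"
    and u :: "nat \<Rightarrow> real \<Rightarrow> real" and rb :: "nat \<Rightarrow> real"
  assumes Q_deriv: "\<forall>x>0. (Q has_real_derivative dQ x) (at x)"
    and \<sigma>_pos: "\<sigma> > 0" and Q_tendsto: "(Q \<longlongrightarrow> \<sigma>) at_top"
    and sdQ_tendsto: "((\<lambda>s. s * dQ s) \<longlongrightarrow> 0) at_top"
    and q_pos: "q > 0" and Q_ge_q: "\<And>t. t > 0 \<Longrightarrow> q \<le> Q t"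
    and u0_setA: "\<And>k. u0 k \<in> setA Q" and u0_tendsto: "filterlim u0 at_top sequentially"
    and solves: "\<And>k. solves_P Q dQ (u0 k) (u k) (rb k)"
begin

definition du :: "nat \<Rightarrow> real \<Rightarrow> real" where
  "du k = (SOME v'. v' 0 = 0 \<and>
     (\<forall>x. \<bar>x\<bar> < rb k \<longrightarrow> (u k has_real_derivative v' x) (at x) \<and>
        (v' has_real_derivative dQ (u k x) - RR Q (u0 k)) (at x) \<and>
        (v' x)\<^sup>2 = 2 * potential Q (u0 k) (u k x)) \<and>
     (\<forall>x. 0 < x \<and> x < rb k \<longrightarrow> v' x < 0))"

lemma du_spec:
  "du k 0 = 0 \<and>
     (\<forall>x. \<bar>x\<bar> < rb k \<longrightarrow> (u k has_real_derivative du k x) (at x) \<and>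
        (du k has_real_derivative dQ (u k x) - RR Q (u0 k)) (at x) \<and>
        (du k x)\<^sup>2 = 2 * potential Q (u0 k) (u k x)) \<and>
     (\<forall>x. 0 < x \<and> x < rb k \<longrightarrow> du k x < 0)"
proof -
  obtain v' where "v' 0 = 0"
    "\<And>x. \<bar>x\<bar> < rb k \<Longrightarrow> (u k has_real_derivative v' x) (at x)"
    "\<And>x. \<bar>x\<bar> < rb k \<Longrightarrow> (v' has_real_derivative dQ (u k x) - RR Q (u0 k)) (at x)"
    "\<And>x. \<bar>x\<bar> < rb k \<Longrightarrow> (v' x)\<^sup>2 = 2 * potential Q (u0 k) (u k x)"
    "\<And>x. 0 < x \<Longrightarrow> x < rb k \<Longrightarrow> v' x < 0"
    using setA_solution_profile[OF Q_deriv u0_setA solves] by metis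
  hence "\<exists>v'. v' 0 = 0 \<and>
     (\<forall>x. \<bar>x\<bar> < rb k \<longrightarrow> (u k has_real_derivative v' x) (at x) \<and>
        (v' has_real_derivative dQ (u k x) - RR Q (u0 k)) (at x) \<and>
        (v' x)\<^sup>2 = 2 * potential Q (u0 k) (u k x)) \<and>
     (\<forall>x. 0 < x \<and> x < rb k \<longrightarrow> v' x < 0)" by blast
  thus ?thesis unfolding du_def by (rule someI_ex)
qed

lemma du_0: "du k 0 = 0"
  using du_spec by blast

lemma u_has_real_derivative: "\<bar>x\<bar> < rb k \<Longrightarrow> (u k has_real_derivative du k x) (at x)"
  using du_spec by blast

lemma du_has_real_derivative:
  "\<bar>x\<bar> < rb k \<Longrightarrow> (du k has_real_derivative dQ (u k x) - RR Q (u0 k)) (at x)"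
  using du_spec by blast

lemma du_squared: "\<bar>x\<bar> < rb k \<Longrightarrow> (du k x)\<^sup>2 = 2 * potential Q (u0 k) (u k x)"
  using du_spec by blast

lemma du_neg: "0 < x \<Longrightarrow> x < rb k \<Longrightarrow> du k x < 0"
  using du_spec by blast

lemma u0_pos: "u0 k > 0"
  using u0_setA[of k] unfolding setA_def by auto

lemma rb_pos: "rb k > 0"
  using solves[of k] unfolding solves_P_def by auto

lemma u_0: "u k 0 = u0 k"
  using solves[of k] unfolding solves_P_def by auto

lemma u_continuous_on: "continuous_on S (u k)"
  using solves[of k] continuous_on_subset unfolding solves_P_def by blast

lemma u_pos: "\<bar>x\<bar> < rb k \<Longrightarrow> u k x > 0"
  using solves[of k] unfolding solves_P_def by auto

lemma u_eq_0: "\<bar>x\<bar> \<ge> rb k \<Longrightarrow> u k x = 0"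
  using solves[of k] unfolding solves_P_def by auto

lemma u_nonneg: "u k x \<ge> 0"
  using u_pos[of x k] u_eq_0[of k x] by (cases "\<bar>x\<bar> < rb k") auto

lemma u_rb: "u k (rb k) = 0"
  using u_eq_0[of k "rb k"] rb_pos[of k] by simp

lemma u_strict_decreasing: "0 \<le> x \<Longrightarrow> x < y \<Longrightarrow> y \<le> rb k \<Longrightarrow> u k y < u k x"
proof (rule DERIV_neg_imp_decreasing_open[where f = "u k"])
  fix z assume "0 \<le> x" "x < z" "z < y" "y \<le> rb k"
  thus "\<exists>l. (u k has_real_derivative l) (at z) \<and> l < 0"
    using u_has_real_derivative[of z k] du_neg[of z k] by auto
qed (simp_all add: u_continuous_on)

lemma u_less_u0: "0 < x \<Longrightarrow> u k x < u0 k"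
  using u_strict_decreasing[of 0 x k] u_eq_0[of k x] u_0[of k] u0_pos[of k]
  by (cases "x < rb k") auto

lemma u_le_u0_nonneg: "0 \<le> x \<Longrightarrow> u k x \<le> u0 k"
  using u_less_u0[of x k] u_0[of k] by (cases "x = 0") auto

lemma du_eq_neg_sqrt: "0 \<le> x \<Longrightarrow> x < rb k \<Longrightarrow> du k x = - sqrt (2 * potential Q (u0 k) (u k x))"
  using du_squared[of x k] du_neg[of x k] du_0[of k] real_sqrt_abs[of "du k x"]
  by (cases "x = 0") auto

lemma eventually_u0: "eventually P at_top \<Longrightarrow> \<forall>\<^sub>F k in sequentially. P (u0 k)"
  using u0_tendsto unfolding filterlim_iff by blast

lemma Q_u0_tendsto: "(\<lambda>k. Q (u0 k)) \<longlonglongrightarrow> \<sigma>"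
  using filterlim_compose[OF Q_tendsto u0_tendsto] .

lemma eventually_potential_near_linear:
  assumes d: "0 < d"
  shows "\<forall>\<^sub>F k in sequentially. \<forall>t. d * u0 k \<le> t \<and> t \<le> u0 k \<longrightarrow>
      \<bar>potential Q (u0 k) t - \<sigma> * (1 - t / u0 k)\<bar> \<le> d * (1 - t / u0 k)"
proof -
  obtain M where M: "\<And>t. t \<ge> M \<Longrightarrow> \<bar>t * dQ t\<bar> \<le> d\<^sup>2/2"
    using tendstoD[OF sdQ_tendsto, of "d\<^sup>2/2"] d
    unfolding eventually_at_top_linorder dist_real_def by (auto intro: less_imp_le)
  have "\<forall>\<^sub>F s in at_top. dist (Q s) \<sigma> < d/2 \<and> s \<ge> M / d"
    using tendstoD[OF Q_tendsto, of "d/2"] d eventually_ge_at_top[of "M / d"]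
    by (intro eventually_conj) auto
  from eventually_u0[OF this] show ?thesis
  proof eventually_elim
    case (elim k)
    have "M \<le> d * u0 k" using elim d by (simp add: field_simps)
    hence "\<bar>t * dQ t\<bar> \<le> d\<^sup>2/2" if "t \<ge> d * u0 k" for t
      using M that by auto
    with potential_near_linear[OF Q_deriv u0_pos d] elim show ?case
      by (auto simp: dist_real_def)
  qed
qed

lemma eventually_potential_ge_half_q:
  assumes d: "0 < d" "d \<le> q / (4 * \<sigma>)"
  shows "\<forall>\<^sub>F k in sequentially. \<forall>t. 0 < t \<and> t \<le> d * u0 k \<longrightarrow> potential Q (u0 k) t \<ge> q / 2"
proof -
  have "\<forall>\<^sub>F k in sequentially. Q (u0 k) < 2 * \<sigma>"
    using order_tendstoD(2)[OF Q_u0_tendsto, of "2 * \<sigma>"] \<sigma>_pos by simp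
  thus ?thesis
  proof eventually_elim
    case (elim k)
    show ?case
    proof (intro allI impI)
      fix t assume t: "0 < t \<and> t \<le> d * u0 k"
      have "t * RR Q (u0 k) = (t / u0 k) * Q (u0 k)" unfolding RR_def by simp
      also have "\<dots> \<le> d * (2 * \<sigma>)"
      proof (rule mult_mono)
        show "t / u0 k \<le> d" using t u0_pos[of k] by (simp add: divide_le_eq)
      qed (use elim d Q_ge_q[OF u0_pos, of k] q_pos in auto)
      also have "\<dots> \<le> q / 2" using d \<sigma>_pos by (simp add: field_simps)
      finally show "potential Q (u0 k) t \<ge> q / 2" unfolding potential_def using Q_ge_q[of t] t by simp
    qed
  qed
qed

subsection \<open>The support radius\<close>

definition a :: real where "a = sqrt (\<sigma> / 2)"

lemma a_pos: "a > 0"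
  using \<sigma>_pos unfolding a_def by simp

lemma a_squared: "a\<^sup>2 = \<sigma> / 2"
  using \<sigma>_pos unfolding a_def by simp

lemma slope_estimate:
  assumes d: "0 < d"
    and H: "\<forall>t. d * u0 k \<le> t \<and> t \<le> u0 k \<longrightarrow>
      \<bar>potential Q (u0 k) t - \<sigma> * (1 - t / u0 k)\<bar> \<le> d * (1 - t / u0 k)"
    and z: "0 < z" "z < rb k" "d * u0 k \<le> u k z"
  shows "\<bar>- du k z / (2 * sqrt (1 - u k z / u0 k)) - a\<bar> \<le> d / (2 * a)"
proof -
  define w where "w = 1 - u k z / u0 k"
  define p where "p = - du k z / (2 * sqrt w)"
  have w: "w > 0" using u_less_u0[OF z(1), of k] u0_pos[of k] unfolding w_def by simp
  have "p \<ge> 0" using du_neg[OF z(1,2)] w unfolding p_def by (simp add: divide_nonpos_pos)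
  moreover have "\<bar>p\<^sup>2 - a\<^sup>2\<bar> \<le> d / 2"
  proof -
    have "p\<^sup>2 = potential Q (u0 k) (u k z) / (2 * w)"
      using du_squared[of z k] z w unfolding p_def by (simp add: power_divide power_mult_distrib)
    hence "p\<^sup>2 - a\<^sup>2 = (potential Q (u0 k) (u k z) - \<sigma> * w) / (2 * w)"
      using w unfolding a_squared by (simp add: field_simps)
    moreover have "\<bar>potential Q (u0 k) (u k z) - \<sigma> * w\<bar> \<le> d * w"
      using H z u_le_u0_nonneg[of z k] unfolding w_def by auto
    ultimately show ?thesis using w by (simp add: abs_divide divide_le_eq)
  qed
  ultimately have "\<bar>p - a\<bar> \<le> d / 2 / a"
    using a_pos by (intro abs_sub_le_of_abs_square_sub_le)
  thus ?thesis unfolding p_def w_def by simp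
qed

lemma sqrt_profile_estimate:
  assumes d: "0 < d"
    and H: "\<forall>t. d * u0 k \<le> t \<and> t \<le> u0 k \<longrightarrow>
      \<bar>potential Q (u0 k) t - \<sigma> * (1 - t / u0 k)\<bar> \<le> d * (1 - t / u0 k)"
    and x: "0 < x" "x < rb k" "d * u0 k \<le> u k x"
  shows "\<bar>u0 k * sqrt (1 - u k x / u0 k) - a * x\<bar> \<le> d / (2 * a) * x"
proof -
  define h where "h y = u0 k * sqrt (1 - u k y / u0 k)" for y
  have s: "u0 k > 0" by (rule u0_pos)
  have Dh: "(h has_real_derivative - du k y / (2 * sqrt (1 - u k y / u0 k))) (at y)"
    if "0 < y" "y < rb k" for y
  proof -
    have "1 - u k y / u0 k > 0" using u_less_u0[OF that(1)] s by simp
    hence "(h has_real_derivative u0 k * (inverse (sqrt (1 - u k y / u0 k)) / 2 * (0 - du k y / u0 k))) (at y)"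
      unfolding h_def using that
      by (intro DERIV_cmult DERIV_chain2[OF DERIV_real_sqrt] DERIV_diff DERIV_const DERIV_cdivide
          u_has_real_derivative) auto
    thus ?thesis using s by (simp add: field_simps)
  qed
  obtain z where z: "0 < z" "z < x"
    and mvt: "h x - h 0 = x * (- du k z / (2 * sqrt (1 - u k z / u0 k)))"
  proof -
    have "continuous_on {0..x} h" unfolding h_def
      using s by (intro continuous_intros u_continuous_on) auto
    moreover have "\<And>y. 0 < y \<Longrightarrow> y < x \<Longrightarrow> h differentiable (at y)"
      using Dh x unfolding real_differentiable_def by fastforce
    ultimately obtain l z where "0 < z" "z < x" "(h has_real_derivative l) (at z)" "h x - h 0 = (x - 0) * l"
      using MVT[OF x(1)] by blast
    thus ?thesis using that DERIV_unique[OF _ Dh] x by force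
  qed
  define p where "p = - du k z / (2 * sqrt (1 - u k z / u0 k))"
  have "d * u0 k \<le> u k z" using x z u_strict_decreasing[of z x k] by simp
  hence "\<bar>p - a\<bar> \<le> d / (2 * a)"
    using slope_estimate[OF d H] z x unfolding p_def by simp
  moreover have "h x - a * x = x * (p - a)"
    using mvt u_0[of k] s unfolding h_def p_def by (simp add: algebra_simps)
  ultimately have "\<bar>h x - a * x\<bar> \<le> x * (d / (2 * a))"
    using x by (simp only: abs_mult abs_of_pos mult_left_mono)
  thus ?thesis unfolding h_def by (simp add: mult.commute)
qed

lemma tail_length_bound:
  assumes T: "\<forall>t. 0 < t \<and> t \<le> c \<longrightarrow> potential Q (u0 k) t \<ge> q / 2"
    and x: "0 \<le> x" "x < rb k" "u k x \<le> c"
  shows "rb k - x \<le> c / sqrt q"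
proof -
  have "\<And>y. x < y \<Longrightarrow> y < rb k \<Longrightarrow> u k differentiable (at y)"
    using u_has_real_derivative x unfolding real_differentiable_def by force
  then obtain l z where z: "x < z" "z < rb k" "(u k has_real_derivative l) (at z)"
    and mvt: "u k (rb k) - u k x = (rb k - x) * l"
    using MVT[OF x(2) u_continuous_on] by blast
  have zr: "\<bar>z\<bar> < rb k" using z x by auto
  have l: "l = - sqrt (2 * potential Q (u0 k) (u k z))"
    using DERIV_unique[OF z(3) u_has_real_derivative[OF zr]] du_eq_neg_sqrt[of z k] z x by simp
  have "0 < u k z" "u k z \<le> c" using u_pos[OF zr] u_strict_decreasing[of x z k] z x by auto
  hence "q \<le> 2 * potential Q (u0 k) (u k z)" using T by fastforce
  hence "sqrt q \<le> - l" unfolding l by simp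
  hence "(rb k - x) * sqrt q \<le> (rb k - x) * (- l)"
    using x by (intro mult_left_mono) auto
  also have "\<dots> = u k x" using mvt u_rb[of k] by simp
  finally have "(rb k - x) * sqrt q \<le> u k x" .
  thus ?thesis using x q_pos by (simp add: le_divide_eq)
qed

lemma level_point:
  assumes "0 < c" "c < 1"
  obtains x where "0 < x" "x < rb k" "u k x = c * u0 k"
proof -
  have "u k (rb k) \<le> c * u0 k" "c * u0 k \<le> u k 0"
    using assms u_rb[of k] u_0[of k] u0_pos[of k] by auto
  then obtain x where x: "0 \<le> x" "x \<le> rb k" "u k x = c * u0 k"
    using IVT2'[of "u k" "rb k" _ 0] rb_pos[of k] u_continuous_on by force
  moreover have "x \<noteq> 0" "x \<noteq> rb k"
    using x assms u_0[of k] u_rb[of k] u0_pos[of k] by auto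
  ultimately show ?thesis using that by (simp add: less_le)
qed

definition err :: "real \<Rightarrow> real" where "err d = d / (2 * a)"
definition lo :: "real \<Rightarrow> real" where "lo d = sqrt (1 - d) / (a + err d)"
definition hi :: "real \<Rightarrow> real" where "hi d = sqrt (1 - d) / (a - err d) + d / sqrt q"
text \<open>Below d1 one has err d < a, and d \<le> q / (4 \<sigma>) as needed by eventually_potential_ge_half_q.\<close>
definition d1 :: real where "d1 = min (1/2) (min (q / (4 * \<sigma>)) \<sigma>)"

lemma d1_pos: "d1 > 0"
  using q_pos \<sigma>_pos unfolding d1_def by auto

lemma err_bounds: "0 < d \<Longrightarrow> d < d1 \<Longrightarrow> 0 < err d \<and> err d < a"
  using a_pos a_squared unfolding err_def d1_def by (simp add: field_simps power2_eq_square)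

lemma err_tendsto: "(err \<longlongrightarrow> 0) (at_right 0)"
  unfolding err_def using a_pos by (auto intro!: tendsto_eq_intros)

lemma lo_tendsto: "(lo \<longlongrightarrow> 1 / a) (at_right 0)"
  unfolding lo_def err_def using a_pos by (auto intro!: tendsto_eq_intros)

lemma hi_tendsto: "(hi \<longlongrightarrow> 1 / a) (at_right 0)"
  unfolding hi_def err_def using a_pos q_pos by (auto intro!: tendsto_eq_intros)

lemma eventually_sqrt_profile_estimate:
  assumes "0 < d"
  shows "\<forall>\<^sub>F k in sequentially. \<forall>x. 0 < x \<and> x < rb k \<and> d * u0 k \<le> u k x \<longrightarrow>
    \<bar>u0 k * sqrt (1 - u k x / u0 k) - a * x\<bar> \<le> err d * x"
  using eventually_potential_near_linear[OF assms]
  by eventually_elim (use sqrt_profile_estimate[OF assms] in \<open>auto simp: err_def\<close>)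

lemma eventually_level_point_bounds:
  assumes d: "0 < d" "d < d1"
  shows "\<forall>\<^sub>F k in sequentially. \<exists>x. 0 < x \<and> x < rb k \<and> u k x = d * u0 k \<and>
    lo d * u0 k \<le> x \<and> rb k \<le> hi d * u0 k"
proof -
  have d': "d < 1" "d \<le> q / (4 * \<sigma>)" using d unfolding d1_def by auto
  have e: "0 < err d" "err d < a" using err_bounds[OF d] by auto
  show ?thesis
    using eventually_sqrt_profile_estimate[OF d(1)] eventually_potential_ge_half_q[OF d(1) d'(2)]
  proof eventually_elim
    case (elim k)
    have s: "u0 k > 0" by (rule u0_pos)
    obtain x where x: "0 < x" "x < rb k" "u k x = d * u0 k"
      using level_point[OF d(1) d'(1)] by blast
    have "\<bar>u0 k * sqrt (1 - d) - a * x\<bar> \<le> err d * x"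
      using elim(1) x s by auto
    hence x1: "u0 k * sqrt (1 - d) \<le> (a + err d) * x" and x2: "(a - err d) * x \<le> u0 k * sqrt (1 - d)"
      by (auto simp: algebra_simps abs_le_iff)
    have "lo d * u0 k \<le> x"
      using x1 e a_pos unfolding lo_def by (simp add: field_simps)
    moreover have "rb k \<le> hi d * u0 k"
    proof -
      have "rb k - x \<le> d * u0 k / sqrt q"
        using tail_length_bound[OF elim(2)] x by simp
      moreover have "x \<le> sqrt (1 - d) / (a - err d) * u0 k"
        using x2 e by (simp add: field_simps)
      ultimately show ?thesis unfolding hi_def by (simp add: algebra_simps)
    qed
    ultimately show ?case using x by blast
  qed
qed

lemma rb_u0_tendsto: "(\<lambda>k. rb k / u0 k) \<longlonglongrightarrow> 1 / a"
proof (rule LIMSEQ_squeeze_at_right[OF d1_pos _ lo_tendsto hi_tendsto])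
  fix d :: real assume d: "0 < d" "d < d1"
  show "\<forall>\<^sub>F k in sequentially. lo d \<le> rb k / u0 k \<and> rb k / u0 k \<le> hi d"
    using eventually_level_point_bounds[OF d]
  proof eventually_elim
    case (elim k)
    then obtain x where "0 < x" "x < rb k" "lo d * u0 k \<le> x" "rb k \<le> hi d * u0 k" by blast
    thus ?case using u0_pos[of k] by (simp add: field_simps)
  qed
qed

lemma small_level_exists:
  assumes "\<rho> < 1" "\<epsilon> > 0"
  obtains d where "0 < d" "d < d1" "\<rho> / a < lo d" "err d < \<epsilon> * a / 8"
proof -
  have "\<forall>\<^sub>F d in at_right 0. 0 < d \<and> d < d1 \<and> \<rho> / a < lo d \<and> err d < \<epsilon> * a / 8"
  proof (intro eventually_conj)
    show "\<forall>\<^sub>F d in at_right 0. d < d1"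
      unfolding eventually_at_right_field using d1_pos by (intro exI[of _ d1]) auto
    show "\<forall>\<^sub>F d in at_right 0. \<rho> / a < lo d"
      using assms a_pos by (intro order_tendstoD(1)[OF lo_tendsto]) (simp add: divide_strict_right_mono)
    show "\<forall>\<^sub>F d in at_right 0. err d < \<epsilon> * a / 8"
      using assms a_pos by (intro order_tendstoD(2)[OF err_tendsto]) simp
  qed (simp add: eventually_at_right_less)
  thus ?thesis using that eventually_happens[of _ "at_right (0::real)"] by auto
qed

subsection \<open>The rescaled profile and its derivatives\<close>

lemma profile_parabola_estimate:
  assumes HB: "\<forall>x. 0 < x \<and> x < rb k \<and> d * u0 k \<le> u k x \<longrightarrow>
      \<bar>u0 k * sqrt (1 - u k x / u0 k) - a * x\<bar> \<le> err d * x"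
    and e: "0 \<le> err d" and y: "0 \<le> y" "y < 1" and big: "d * u0 k \<le> u k (rb k * y)"
  shows "\<bar>u k (rb k * y) / u0 k - (1 - y\<^sup>2)\<bar> \<le> 2 * (err d * (rb k / u0 k) + a * \<bar>rb k / u0 k - 1 / a\<bar>)"
proof (cases "y = 0")
  case True
  have "0 \<le> err d * (rb k / u0 k)" using e rb_pos[of k] u0_pos[of k] by simp
  moreover have "0 \<le> a * \<bar>rb k / u0 k - 1 / a\<bar>" using a_pos by simp
  ultimately show ?thesis using True u_0[of k] u0_pos[of k] by (simp only: add_nonneg_nonneg) simp
next
  case False
  define s r H where "s = u0 k" and "r = rb k" and "H = sqrt (1 - u k (rb k * y) / u0 k)"
  have s: "s > 0" and r: "r > 0" unfolding s_def r_def by (rule u0_pos, rule rb_pos)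
  have ry: "0 < r * y" "r * y < r" using r y False by auto
  have H: "0 \<le> H" "H \<le> 1" "H\<^sup>2 = 1 - u k (r * y) / s"
    using u_nonneg[of k "r * y"] u_le_u0_nonneg[of "r * y" k] ry s unfolding H_def s_def r_def by auto
  have "s * \<bar>H - a * (r / s) * y\<bar> = \<bar>s * H - a * (r * y)\<bar>"
    using s by (simp add: abs_mult[symmetric] field_simps)
  also have "\<dots> \<le> err d * (r * y)"
    using HB big ry unfolding s_def r_def H_def by auto
  also have "\<dots> = s * (err d * (r / s) * y)" using s by simp
  finally have "s * \<bar>H - a * (r / s) * y\<bar> \<le> s * (err d * (r / s) * y)" .
  hence "\<bar>H - a * (r / s) * y\<bar> \<le> err d * (r / s) * y" using s by (rule mult_left_le_imp_le)
  also have "\<dots> \<le> err d * (r / s)" by (rule mult_left_le) (use e r s y in auto)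
  finally have H1: "\<bar>H - a * (r / s) * y\<bar> \<le> err d * (r / s)" .
  have "a * (r / s) * y - y = a * (r / s - 1 / a) * y"
    using a_pos by (simp add: field_simps)
  hence "\<bar>a * (r / s) * y - y\<bar> = a * \<bar>r / s - 1 / a\<bar> * y"
    using a_pos y by (simp add: abs_mult)
  also have "\<dots> \<le> a * \<bar>r / s - 1 / a\<bar>" by (rule mult_left_le) (use a_pos y in auto)
  finally have Hy: "\<bar>H - y\<bar> \<le> err d * (r / s) + a * \<bar>r / s - 1 / a\<bar>" using H1 by linarith
  have "u k (r * y) / s - (1 - y\<^sup>2) = (y - H) * (H + y)"
    using H(3) by (simp add: algebra_simps power2_eq_square)
  hence "\<bar>u k (r * y) / s - (1 - y\<^sup>2)\<bar> = \<bar>H - y\<bar> * (H + y)"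
    using H y by (simp add: abs_mult abs_minus_commute[of y H])
  also have "\<dots> \<le> (err d * (r / s) + a * \<bar>r / s - 1 / a\<bar>) * 2"
    using Hy H y by (intro mult_mono) auto
  finally show ?thesis unfolding s_def r_def by (simp only: mult.commute)
qed

lemma profile_uniform_limit_nonneg:
  assumes \<rho>: "0 \<le> \<rho>" "\<rho> < 1"
  shows "uniform_limit {0..\<rho>} (\<lambda>k y. u k (rb k * y) / u0 k) (\<lambda>y. 1 - y\<^sup>2) sequentially"
proof (rule uniform_limitI)
  fix \<epsilon> :: real assume "\<epsilon> > 0"
  then obtain d where d: "0 < d" "d < d1" "\<rho> / a < lo d" "err d < \<epsilon> * a / 8"
    using small_level_exists[OF \<rho>(2)] by blast
  have "((\<lambda>k. rb k / u0 k * \<rho>) \<longlongrightarrow> 1 / a * \<rho>) sequentially"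
    by (intro tendsto_intros rb_u0_tendsto)
  hence "\<forall>\<^sub>F k in sequentially. rb k / u0 k * \<rho> < lo d"
    using d(3) by (intro order_tendstoD(2)) auto
  moreover have "\<forall>\<^sub>F k in sequentially. rb k / u0 k < 2 / a"
    using a_pos by (intro order_tendstoD(2)[OF rb_u0_tendsto]) (simp add: divide_strict_right_mono)
  moreover have "\<forall>\<^sub>F k in sequentially. \<bar>rb k / u0 k - 1 / a\<bar> < \<epsilon> / (4 * a)"
    using tendstoD[OF rb_u0_tendsto, of "\<epsilon> / (4 * a)"] \<open>\<epsilon> > 0\<close> a_pos by (simp add: dist_real_def)
  ultimately show "\<forall>\<^sub>F k in sequentially. \<forall>y\<in>{0..\<rho>}. dist (u k (rb k * y) / u0 k) (1 - y\<^sup>2) < \<epsilon>"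
    using eventually_level_point_bounds[OF d(1,2)] eventually_sqrt_profile_estimate[OF d(1)]
  proof eventually_elim
    case (elim k)
    then obtain x where x: "0 < x" "x < rb k" "u k x = d * u0 k" "lo d * u0 k \<le> x" by blast
    have e: "0 \<le> err d" using err_bounds[OF d(1,2)] by simp
    show ?case
    proof
      fix y assume y: "y \<in> {0..\<rho>}"
      have "rb k * y \<le> rb k / u0 k * \<rho> * u0 k"
        using y rb_pos[of k] u0_pos[of k] by (simp add: mult_left_mono)
      also have "\<dots> < lo d * u0 k" using elim(1) u0_pos[of k] by (rule mult_strict_right_mono)
      finally have "rb k * y < x" using x by simp
      hence "d * u0 k \<le> u k (rb k * y)"
        using u_strict_decreasing[of "rb k * y" x k] x y rb_pos[of k] by (simp add: less_imp_le)
      hence "\<bar>u k (rb k * y) / u0 k - (1 - y\<^sup>2)\<bar> \<le> 2 * (err d * (rb k / u0 k) + a * \<bar>rb k / u0 k - 1 / a\<bar>)"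
        using profile_parabola_estimate[OF elim(5) e] y \<rho> by simp
      also have "\<dots> < 2 * (\<epsilon> * a / 8 * (2 / a) + a * (\<epsilon> / (4 * a)))"
        using d(4) elim(2,3) e a_pos rb_pos[of k] u0_pos[of k]
        by (intro mult_strict_left_mono add_less_le_mono mult_strict_mono mult_left_mono) auto
      also have "\<dots> = \<epsilon>" using a_pos by (simp add: field_simps)
      finally show "dist (u k (rb k * y) / u0 k) (1 - y\<^sup>2) < \<epsilon>" by (simp add: dist_real_def)
    qed
  qed
qed

lemma reflected_family: "large_amplitude_family Q dQ \<sigma> q u0 (\<lambda>k x. u k (-x)) rb"
  using Q_deriv \<sigma>_pos Q_tendsto sdQ_tendsto q_pos Q_ge_q u0_setA u0_tendsto solves_P_reflect[OF solves]
  by unfold_locales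

lemma u_le_u0: "u k x \<le> u0 k"
  using u_le_u0_nonneg[of x k] large_amplitude_family.u_le_u0_nonneg[OF reflected_family, of "-x" k]
  by (cases "x \<ge> 0") auto

lemma profile_uniform_limit:
  assumes \<rho>: "0 \<le> \<rho>" "\<rho> < 1"
  shows "uniform_limit {-\<rho>..\<rho>} (\<lambda>k y. u k (rb k * y) / u0 k) (\<lambda>y. 1 - y\<^sup>2) sequentially"
proof -
  have "uniform_limit {-\<rho>..0} (\<lambda>k y. u k (- (rb k * (- y))) / u0 k) (\<lambda>y. 1 - (- y)\<^sup>2) sequentially"
    using large_amplitude_family.profile_uniform_limit_nonneg[OF reflected_family \<rho>]
    by (rule uniform_limit_compose') auto
  hence "uniform_limit {-\<rho>..0} (\<lambda>k y. u k (rb k * y) / u0 k) (\<lambda>y. 1 - y\<^sup>2) sequentially"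
    by simp
  moreover have "{-\<rho>..\<rho>} = {-\<rho>..0} \<union> {0..\<rho>}" using \<rho> by auto
  ultimately show ?thesis
    using uniform_limit_on_Un[OF _ profile_uniform_limit_nonneg[OF \<rho>]] by simp
qed

lemma du_pos: "- rb k < x \<Longrightarrow> x < 0 \<Longrightarrow> du k x > 0"
proof -
  assume x: "- rb k < x" "x < 0"
  let ?w = "large_amplitude_family.du Q dQ u0 (\<lambda>k x. u k (-x)) rb k (-x)"
  have "\<bar>-x\<bar> < rb k" using x by auto
  from large_amplitude_family.u_has_real_derivative[OF reflected_family this]
  have "((\<lambda>y. u k (-y)) has_real_derivative ?w) (at (-x))" by simp
  moreover have "((\<lambda>y. u k (-y)) has_real_derivative - du k x) (at (-x))"
    using u_has_real_derivative[of x k] x DERIV_mirror[where f="u k" and x="-x" and y="du k x"] by simp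
  ultimately have "?w = - du k x" by (rule DERIV_unique)
  moreover have "?w < 0"
    using large_amplitude_family.du_neg[OF reflected_family, of "-x" k] x by simp
  ultimately show ?thesis by simp
qed

lemma du_eq_sgn_sqrt: "\<bar>x\<bar> < rb k \<Longrightarrow> du k x = - sgn x * sqrt (2 * potential Q (u0 k) (u k x))"
proof -
  assume x: "\<bar>x\<bar> < rb k"
  have "\<bar>du k x\<bar> = sqrt (2 * potential Q (u0 k) (u k x))"
    using du_squared[OF x] real_sqrt_abs[of "du k x"] by simp
  moreover have "sgn (du k x) = - sgn x"
  proof (cases x "0::real" rule: linorder_cases)
    case less thus ?thesis using du_pos[of k x] x by simp
  next
    case equal thus ?thesis using du_0[of k] by simp
  next
    case greater thus ?thesis using du_neg[of x k] x by simp
  qed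
  ultimately show ?thesis
    using sgn_mult_abs[of "du k x"] by (simp add: mult.commute)
qed

lemma profile_has_real_derivative:
  assumes "\<bar>y\<bar> < 1"
  shows "((\<lambda>y. u k (rb k * y) / u0 k) has_real_derivative rb k * du k (rb k * y) / u0 k) (at y)"
proof -
  have "\<bar>rb k * y\<bar> < rb k" using assms rb_pos[of k] by (simp add: abs_mult)
  from DERIV_chain2[OF u_has_real_derivative[OF this] DERIV_cmult_Id[of "rb k" y]]
  have "((\<lambda>y. u k (rb k * y)) has_real_derivative du k (rb k * y) * rb k) (at y)" .
  from DERIV_cdivide[OF this, of "u0 k"] show ?thesis by (simp add: mult.commute)
qed

lemma deriv_profile:
  "\<bar>y\<bar> < 1 \<Longrightarrow> deriv (\<lambda>y. u k (rb k * y) / u0 k) y = rb k * du k (rb k * y) / u0 k"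
  by (rule DERIV_imp_deriv[OF profile_has_real_derivative])

lemma deriv2_profile:
  assumes y: "\<bar>y\<bar> < 1"
  shows "deriv (deriv (\<lambda>y. u k (rb k * y) / u0 k)) y
    = (rb k / u0 k)\<^sup>2 * (u0 k * dQ (u k (rb k * y)) - Q (u0 k))"
proof -
  have "\<bar>rb k * y\<bar> < rb k" using y rb_pos[of k] by (simp add: abs_mult)
  from DERIV_chain2[OF du_has_real_derivative[OF this] DERIV_cmult_Id[of "rb k" y]]
  have "((\<lambda>y. rb k * du k (rb k * y) / u0 k) has_real_derivative
      (rb k / u0 k)\<^sup>2 * (u0 k * dQ (u k (rb k * y)) - Q (u0 k))) (at y)"
    using u0_pos[of k]
    by (auto intro!: derivative_eq_intros simp: RR_def power2_eq_square field_simps)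
  hence "(deriv (\<lambda>y. u k (rb k * y) / u0 k) has_real_derivative
      (rb k / u0 k)\<^sup>2 * (u0 k * dQ (u k (rb k * y)) - Q (u0 k))) (at y)"
    by (rule has_field_derivative_transform_within_open[where S = "{-1<..<1}"])
       (use y deriv_profile in auto)
  thus ?thesis by (rule DERIV_imp_deriv)
qed

lemma eventually_profile_ge:
  assumes \<rho>: "0 \<le> \<rho>" "\<rho> < 1"
  shows "\<forall>\<^sub>F k in sequentially. \<forall>y\<in>{-\<rho>..\<rho>}. u k (rb k * y) \<ge> (1 - \<rho>\<^sup>2) / 2 * u0 k"
proof -
  have c: "(1 - \<rho>\<^sup>2) / 2 > 0" using \<rho> by (simp add: power_less_one_iff abs_square_less_1)
  show ?thesis using uniform_limitD[OF profile_uniform_limit[OF \<rho>] c]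
  proof eventually_elim
    case (elim k)
    show ?case
    proof
      fix y assume y: "y \<in> {-\<rho>..\<rho>}"
      hence "\<bar>y\<bar> \<le> \<bar>\<rho>\<bar>" using \<rho> by auto
      hence "2 * ((1 - \<rho>\<^sup>2) / 2) \<le> 1 - y\<^sup>2" by (simp add: abs_le_square_iff)
      moreover have "\<bar>u k (rb k * y) / u0 k - (1 - y\<^sup>2)\<bar> < (1 - \<rho>\<^sup>2) / 2"
        using elim y by (simp add: dist_real_def)
      moreover have "c \<le> p" if "\<bar>p - z\<bar> < c" "2 * c \<le> z" for p z c :: real
        using that by linarith
      ultimately have "u k (rb k * y) / u0 k \<ge> (1 - \<rho>\<^sup>2) / 2" by blast
      thus "u k (rb k * y) \<ge> (1 - \<rho>\<^sup>2) / 2 * u0 k" using u0_pos[of k] by (simp add: le_divide_eq)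
    qed
  qed
qed

lemma potential_profile_uniform_limit:
  assumes \<rho>: "0 \<le> \<rho>" "\<rho> < 1"
  shows "uniform_limit {-\<rho>..\<rho>} (\<lambda>k y. potential Q (u0 k) (u k (rb k * y))) (\<lambda>y. \<sigma> * y\<^sup>2) sequentially"
proof (rule uniform_limitI)
  fix \<epsilon> :: real assume \<epsilon>: "\<epsilon> > 0"
  define c where "c = (1 - \<rho>\<^sup>2) / 2"
  have c: "c > 0" unfolding c_def using \<rho> by (simp add: power_less_one_iff abs_square_less_1)
  define d where "d = min c (\<epsilon> / 2)"
  have d: "0 < d" "d \<le> c" "d \<le> \<epsilon> / 2" using c \<epsilon> unfolding d_def by auto
  have \<epsilon>': "\<epsilon> / (2 * \<sigma>) > 0" using \<epsilon> \<sigma>_pos by simp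
  show "\<forall>\<^sub>F k in sequentially. \<forall>y\<in>{-\<rho>..\<rho>}. dist (potential Q (u0 k) (u k (rb k * y))) (\<sigma> * y\<^sup>2) < \<epsilon>"
    using eventually_potential_near_linear[OF d(1)] eventually_profile_ge[OF \<rho>]
      uniform_limitD[OF profile_uniform_limit[OF \<rho>] \<epsilon>']
  proof eventually_elim
    case (elim k)
    show ?case
    proof
      fix y assume y: "y \<in> {-\<rho>..\<rho>}"
      define s t where "s = u0 k" and "t = u k (rb k * y)"
      have s: "s > 0" unfolding s_def by (rule u0_pos)
      have "d * s \<le> c * s" using d s by (simp add: mult_right_mono)
      hence t: "d * s \<le> t" "t \<le> s"
        using elim(2) y u_le_u0[of k "rb k * y"] unfolding c_def s_def t_def by fastforce+
      have "\<bar>potential Q s t - \<sigma> * (1 - t / s)\<bar> \<le> d * (1 - t / s)"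
        using elim(1) t unfolding s_def by blast
      also have "\<dots> \<le> \<epsilon> / 2"
        using d t s u_nonneg[of k "rb k * y"] unfolding t_def
        by (intro order_trans[OF mult_left_le]) auto
      finally have A: "\<bar>potential Q s t - \<sigma> * (1 - t / s)\<bar> \<le> \<epsilon> / 2" .
      have "\<bar>t / s - (1 - y\<^sup>2)\<bar> < \<epsilon> / (2 * \<sigma>)"
        using elim(3) y unfolding s_def t_def by (simp add: dist_real_def)
      hence "\<sigma> * \<bar>t / s - (1 - y\<^sup>2)\<bar> < \<epsilon> / 2"
        using \<sigma>_pos by (simp add: field_simps)
      moreover have "\<sigma> * (1 - t / s) - \<sigma> * y\<^sup>2 = - (\<sigma> * (t / s - (1 - y\<^sup>2)))"
        by (simp add: algebra_simps)
      hence "\<bar>\<sigma> * (1 - t / s) - \<sigma> * y\<^sup>2\<bar> = \<sigma> * \<bar>t / s - (1 - y\<^sup>2)\<bar>"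
        using \<sigma>_pos by (simp only: abs_minus_cancel abs_mult abs_of_pos)
      ultimately show "dist (potential Q (u0 k) (u k (rb k * y))) (\<sigma> * y\<^sup>2) < \<epsilon>"
        using A unfolding s_def t_def dist_real_def by linarith
    qed
  qed
qed

lemma scaled_speed_uniform_limit:
  assumes \<rho>: "0 \<le> \<rho>" "\<rho> < 1"
  shows "uniform_limit {-\<rho>..\<rho>} (\<lambda>k y. sqrt ((rb k / u0 k)\<^sup>2 * (2 * potential Q (u0 k) (u k (rb k * y)))))
    (\<lambda>y. 2 * \<bar>y\<bar>) sequentially"
proof -
  have "uniform_limit {-\<rho>..\<rho>} (\<lambda>k y. (rb k / u0 k)\<^sup>2 * (2 * potential Q (u0 k) (u k (rb k * y))))
      (\<lambda>y. (1 / a)\<^sup>2 * (2 * (\<sigma> * y\<^sup>2))) sequentially"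
    by (intro uniform_lim_mult uniform_limit_intros uniform_limit_tendsto_const tendsto_intros
        rb_u0_tendsto potential_profile_uniform_limit[OF \<rho>] compact_imp_bounded
        compact_continuous_image continuous_intros) auto
  hence "uniform_limit {-\<rho>..\<rho>} (\<lambda>k y. sqrt ((rb k / u0 k)\<^sup>2 * (2 * potential Q (u0 k) (u k (rb k * y)))))
      (\<lambda>y. sqrt ((1 / a)\<^sup>2 * (2 * (\<sigma> * y\<^sup>2)))) sequentially"
  proof (rule uniform_limit_sqrt)
    fix k y assume "y \<in> {-\<rho>..\<rho>}"
    hence "\<bar>rb k * y\<bar> < rb k" using \<rho> rb_pos[of k] by (auto simp: abs_mult)
    thus "0 \<le> (rb k / u0 k)\<^sup>2 * (2 * potential Q (u0 k) (u k (rb k * y)))"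
      using du_squared[of "rb k * y" k] by (metis zero_le_power2 zero_le_mult_iff)
  qed (use \<sigma>_pos in simp)
  moreover have "sqrt ((1 / a)\<^sup>2 * (2 * (\<sigma> * y\<^sup>2))) = 2 * \<bar>y\<bar>" for y
  proof -
    have "(1 / a)\<^sup>2 * (2 * (\<sigma> * y\<^sup>2)) = (2 * y)\<^sup>2"
      using a_squared a_pos by (simp add: power_divide field_simps power2_eq_square)
    thus ?thesis by (simp only: real_sqrt_abs)
  qed
  ultimately show ?thesis by simp
qed

lemma deriv_profile_uniform_limit:
  assumes \<rho>: "0 \<le> \<rho>" "\<rho> < 1"
  shows "uniform_limit {-\<rho>..\<rho>} (\<lambda>k. deriv (\<lambda>y. u k (rb k * y) / u0 k)) (\<lambda>y. - 2 * y) sequentially"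
proof -
  have "uniform_limit {-\<rho>..\<rho>} (\<lambda>k y. - sgn y * sqrt ((rb k / u0 k)\<^sup>2 * (2 * potential Q (u0 k) (u k (rb k * y)))))
      (\<lambda>y. - sgn y * (2 * \<bar>y\<bar>)) sequentially"
  proof (rule uniform_lim_mult[OF uniform_limit_const[where c = "\<lambda>y. - sgn y"] scaled_speed_uniform_limit[OF \<rho>]])
    show "bounded ((\<lambda>y. - sgn y) ` {-\<rho>..\<rho>})"
      by (rule bounded_subset[of "{-1..1}"]) (auto simp: sgn_if)
    show "bounded ((\<lambda>y. 2 * \<bar>y\<bar>) ` {-\<rho>..\<rho>})"
      by (intro compact_imp_bounded compact_continuous_image continuous_intros compact_Icc)
  qed
  moreover have "(\<lambda>y::real. - sgn y * (2 * \<bar>y\<bar>)) = (\<lambda>y. - 2 * y)"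
    by (simp add: fun_eq_iff sgn_mult_abs mult.left_commute)
  ultimately have L: "uniform_limit {-\<rho>..\<rho>}
      (\<lambda>k y. - sgn y * sqrt ((rb k / u0 k)\<^sup>2 * (2 * potential Q (u0 k) (u k (rb k * y)))))
      (\<lambda>y. - 2 * y) sequentially"
    by simp
  have "- sgn y * sqrt ((rb k / u0 k)\<^sup>2 * (2 * potential Q (u0 k) (u k (rb k * y))))
      = deriv (\<lambda>y. u k (rb k * y) / u0 k) y" if "y \<in> {-\<rho>..\<rho>}" for k y
  proof -
    have y: "\<bar>y\<bar> < 1" "\<bar>rb k * y\<bar> < rb k" using that \<rho> rb_pos[of k] by (auto simp: abs_mult)
    have "sgn (rb k * y) = sgn y" using rb_pos[of k] by (simp add: sgn_mult)
    thus ?thesis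
      using deriv_profile[OF y(1)] du_eq_sgn_sqrt[OF y(2)] rb_pos[of k] u0_pos[of k]
      by (simp add: real_sqrt_mult)
  qed
  thus ?thesis by (intro iffD1[OF uniform_limit_cong' L]) auto
qed

lemma u0_dQ_profile_uniform_limit:
  assumes \<rho>: "0 \<le> \<rho>" "\<rho> < 1"
  shows "uniform_limit {-\<rho>..\<rho>} (\<lambda>k y. u0 k * dQ (u k (rb k * y))) (\<lambda>y. 0) sequentially"
proof (rule uniform_limitI)
  fix \<epsilon> :: real assume "\<epsilon> > 0"
  define c where "c = (1 - \<rho>\<^sup>2) / 2"
  have c: "c > 0" unfolding c_def using \<rho> by (simp add: power_less_one_iff abs_square_less_1)
  obtain M where M: "\<And>t. t \<ge> M \<Longrightarrow> \<bar>t * dQ t\<bar> < \<epsilon> * c"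
    using tendstoD[OF sdQ_tendsto, of "\<epsilon> * c"] \<open>\<epsilon> > 0\<close> c
    unfolding eventually_at_top_linorder dist_real_def by auto
  show "\<forall>\<^sub>F k in sequentially. \<forall>y\<in>{-\<rho>..\<rho>}. dist (u0 k * dQ (u k (rb k * y))) 0 < \<epsilon>"
    using eventually_u0[OF eventually_ge_at_top[of "M / c"]] eventually_profile_ge[OF \<rho>]
  proof eventually_elim
    case (elim k)
    show ?case
    proof
      fix y assume "y \<in> {-\<rho>..\<rho>}"
      define t where "t = u k (rb k * y)"
      have s: "u0 k > 0" by (rule u0_pos)
      have ts: "c * u0 k \<le> t" using elim(2) \<open>y \<in> {-\<rho>..\<rho>}\<close> unfolding t_def c_def by blast
      have "0 < c * u0 k" using c s by simp
      hence t: "t > 0" using ts by linarith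
      have "M \<le> c * u0 k" using elim(1) c by (simp add: divide_le_eq mult.commute)
      hence "t * \<bar>dQ t\<bar> < \<epsilon> * c"
        using M[of t] ts t by (simp add: abs_mult)
      moreover have "c * u0 k * \<bar>dQ t\<bar> \<le> t * \<bar>dQ t\<bar>" using ts by (simp add: mult_right_mono)
      ultimately have "c * (u0 k * \<bar>dQ t\<bar>) < c * \<epsilon>" by (simp add: algebra_simps)
      hence "u0 k * \<bar>dQ t\<bar> < \<epsilon>" using c by simp
      thus "dist (u0 k * dQ (u k (rb k * y))) 0 < \<epsilon>"
        using s unfolding t_def by (simp add: abs_mult dist_real_def)
    qed
  qed
qed

lemma deriv2_profile_uniform_limit:
  assumes \<rho>: "0 \<le> \<rho>" "\<rho> < 1"
  shows "uniform_limit {-\<rho>..\<rho>} (\<lambda>k. deriv (deriv (\<lambda>y. u k (rb k * y) / u0 k))) (\<lambda>y. - 2) sequentially"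
proof -
  have "(\<lambda>k. (rb k / u0 k)\<^sup>2) \<longlonglongrightarrow> (1 / a)\<^sup>2"
    by (intro tendsto_intros rb_u0_tendsto)
  moreover have "uniform_limit {-\<rho>..\<rho>} (\<lambda>k y. u0 k * dQ (u k (rb k * y)) - Q (u0 k)) (\<lambda>y. 0 - \<sigma>) sequentially"
    by (intro uniform_limit_intros u0_dQ_profile_uniform_limit[OF \<rho>] uniform_limit_tendsto_const Q_u0_tendsto)
  ultimately have "uniform_limit {-\<rho>..\<rho>} (\<lambda>k y. (rb k / u0 k)\<^sup>2 * (u0 k * dQ (u k (rb k * y)) - Q (u0 k)))
      (\<lambda>y. (1 / a)\<^sup>2 * (0 - \<sigma>)) sequentially"
    by (intro uniform_lim_mult uniform_limit_tendsto_const) (auto intro: bounded_subset[of "{_}"])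
  moreover have "(1 / a)\<^sup>2 * (0 - \<sigma>) = - 2"
    using a_squared a_pos by (simp add: power_divide field_simps)
  ultimately have L: "uniform_limit {-\<rho>..\<rho>} (\<lambda>k y. (rb k / u0 k)\<^sup>2 * (u0 k * dQ (u k (rb k * y)) - Q (u0 k)))
      (\<lambda>y. - 2) sequentially"
    by simp
  have "(rb k / u0 k)\<^sup>2 * (u0 k * dQ (u k (rb k * y)) - Q (u0 k)) = deriv (deriv (\<lambda>y. u k (rb k * y) / u0 k)) y"
    if "y \<in> {-\<rho>..\<rho>}" for k y
  proof -
    have "\<bar>y\<bar> < 1" using that \<rho> by auto
    thus ?thesis by (rule deriv2_profile[symmetric])
  qed
  thus ?thesis by (intro iffD1[OF uniform_limit_cong' L]) auto
qed

subsection \<open>The mass\<close>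

lemma profile_continuous_on: "continuous_on S (\<lambda>y. u k (rb k * y) / u0 k)"
  using u0_pos[of k]
  by (intro continuous_intros continuous_on_compose2[OF u_continuous_on[of UNIV k]]) auto

lemma mass_eq_integral_profile:
  "mass (u k) (rb k) = 2 * rb k * u0 k * integral {0..1} (\<lambda>y. u k (rb k * y) / u0 k)"
proof -
  have r: "rb k > 0" by (rule rb_pos)
  have "(\<lambda>x. x / rb k) ` {0..rb k} = {0..1}"
    using r by (auto simp: image_iff field_simps intro!: bexI[of _ "rb k * _"])
  moreover have "integral ((\<lambda>x. x / rb k) ` {0..rb k}) (\<lambda>y. u k (rb k * y))
      = (1 / \<bar>rb k\<bar>) *\<^sub>R integral {0..rb k} (u k)"
    using r by (intro integral_stretch_real) simp
  ultimately show ?thesis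
    using r u0_pos[of k] unfolding mass_def by simp
qed

lemma integral_profile_tendsto: "(\<lambda>k. integral {0..1} (\<lambda>y. u k (rb k * y) / u0 k)) \<longlonglongrightarrow> 2/3"
proof -
  have "(\<lambda>k. integral {0..1} (\<lambda>y. u k (rb k * y) / u0 k)) \<longlonglongrightarrow> integral {0..1} (\<lambda>y. 1 - y\<^sup>2)"
  proof (rule dominated_convergence(2))
    show "(\<lambda>y. u k (rb k * y) / u0 k) integrable_on {0..1}" for k
      by (rule integrable_continuous_interval[OF profile_continuous_on])
    show "(\<lambda>y::real. 1 :: real) integrable_on {0..1}" by (intro integrable_continuous_interval continuous_intros)
    show "norm (u k (rb k * y) / u0 k) \<le> 1" for k y
      using u_nonneg[of k "rb k * y"] u_le_u0[of k "rb k * y"] u0_pos[of k] by simp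
    fix y :: real assume y: "y \<in> {0..1}"
    show "(\<lambda>k. u k (rb k * y) / u0 k) \<longlonglongrightarrow> 1 - y\<^sup>2"
    proof (cases "y = 1")
      case True thus ?thesis using u_rb by simp
    next
      case False
      hence "y \<in> {0..y}" "y < 1" using y by auto
      thus ?thesis using tendsto_uniform_limitI[OF profile_uniform_limit_nonneg] y by simp
    qed
  qed
  thus ?thesis using integral_one_minus_square by simp
qed

lemma mass_ratio_tendsto: "(\<lambda>k. mass (u k) (rb k) / (rb k * u0 k)) \<longlonglongrightarrow> 4/3"
proof -
  have "(\<lambda>k. 2 * integral {0..1} (\<lambda>y. u k (rb k * y) / u0 k)) \<longlonglongrightarrow> 2 * (2/3)"
    by (intro tendsto_intros integral_profile_tendsto)
  moreover have "mass (u k) (rb k) / (rb k * u0 k) = 2 * integral {0..1} (\<lambda>y. u k (rb k * y) / u0 k)" for k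
    using rb_pos[of k] u0_pos[of k] unfolding mass_eq_integral_profile by simp
  ultimately show ?thesis by simp
qed

lemma mass_over_u0_squared_tendsto: "(\<lambda>k. mass (u k) (rb k) / u0 k ^ 2) \<longlonglongrightarrow> 4 / (3 * a)"
proof -
  have "(\<lambda>k. mass (u k) (rb k) / (rb k * u0 k) * (rb k / u0 k)) \<longlonglongrightarrow> 4/3 * (1 / a)"
    by (intro tendsto_intros mass_ratio_tendsto rb_u0_tendsto)
  moreover have "mass (u k) (rb k) / (rb k * u0 k) * (rb k / u0 k) = mass (u k) (rb k) / u0 k ^ 2" for k
    using rb_pos[of k] u0_pos[of k] by (simp add: power2_eq_square)
  ultimately show ?thesis by simp
qed

lemma mass_tendsto_at_top: "filterlim (\<lambda>k. mass (u k) (rb k)) at_top sequentially"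
proof -
  have "filterlim (\<lambda>k. mass (u k) (rb k) / u0 k ^ 2 * u0 k ^ 2) at_top sequentially"
    using a_pos by (intro filterlim_tendsto_pos_mult_at_top[OF mass_over_u0_squared_tendsto]
        filterlim_pow_at_top u0_tendsto) auto
  moreover have "(\<lambda>k. mass (u k) (rb k) / u0 k ^ 2 * u0 k ^ 2) = (\<lambda>k. mass (u k) (rb k))"
    using u0_pos by (simp add: fun_eq_iff less_imp_neq[symmetric])
  ultimately show ?thesis by simp
qed

lemma u0_pow4_over_mass_squared_tendsto:
  "(\<lambda>k. u0 k ^ 4 / mass (u k) (rb k) ^ 2) \<longlonglongrightarrow> 9 * \<sigma> / 32"
proof -
  have "(\<lambda>k. inverse ((mass (u k) (rb k) / u0 k ^ 2)\<^sup>2)) \<longlonglongrightarrow> inverse ((4 / (3 * a))\<^sup>2)"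
    using a_pos by (intro tendsto_intros mass_over_u0_squared_tendsto) auto
  moreover have "inverse ((mass (u k) (rb k) / u0 k ^ 2)\<^sup>2) = u0 k ^ 4 / mass (u k) (rb k) ^ 2" for k
    by (simp add: power_divide field_simps flip: power_mult)
  moreover have "inverse ((4 / (3 * a))\<^sup>2) = 9 * \<sigma> / 32"
    using a_squared by (simp add: power_divide power_mult_distrib field_simps)
  ultimately show ?thesis by simp
qed

lemma u0_pow4_asymp_equiv: "(\<lambda>k. u0 k ^ 4) \<sim>[sequentially] (\<lambda>k. 9 * \<sigma> / 32 * mass (u k) (rb k) ^ 2)"
  using \<sigma>_pos by (intro asymp_equivI'_const u0_pow4_over_mass_squared_tendsto) simp

lemma rb_pow4_asymp_equiv: "(\<lambda>k. rb k ^ 4) \<sim>[sequentially] (\<lambda>k. 9 / (8 * \<sigma>) * mass (u k) (rb k) ^ 2)"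
proof (rule asymp_equivI'_const)
  have "(\<lambda>k. (rb k / u0 k) ^ 4 * (u0 k ^ 4 / mass (u k) (rb k) ^ 2)) \<longlonglongrightarrow> (1 / a) ^ 4 * (9 * \<sigma> / 32)"
    by (intro tendsto_intros rb_u0_tendsto u0_pow4_over_mass_squared_tendsto)
  moreover have "(\<lambda>k. (rb k / u0 k) ^ 4 * (u0 k ^ 4 / mass (u k) (rb k) ^ 2))
      = (\<lambda>k. rb k ^ 4 / mass (u k) (rb k) ^ 2)"
    using u0_pos by (simp add: fun_eq_iff power_divide less_imp_neq[symmetric])
  moreover have "(1 / a) ^ 4 * (9 * \<sigma> / 32) = 9 / (8 * \<sigma>)"
  proof -
    have "a ^ 4 = (\<sigma> / 2)\<^sup>2" using a_squared by (simp flip: a_squared power_mult)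
    thus ?thesis using \<sigma>_pos by (simp add: power_divide power2_eq_square field_simps)
  qed
  ultimately show "(\<lambda>k. rb k ^ 4 / mass (u k) (rb k) ^ 2) \<longlonglongrightarrow> 9 / (8 * \<sigma>)" by metis
qed (use \<sigma>_pos in simp)

lemma profile_C2_convergence:
  assumes "compact K" "K \<subseteq> {-1<..<1}"
  shows "uniform_limit K (\<lambda>k y. u k (rb k * y) / u0 k) (\<lambda>y. 1 - y\<^sup>2) sequentially \<and>
    uniform_limit K (\<lambda>k. deriv (\<lambda>y. u k (rb k * y) / u0 k)) (\<lambda>y. - 2 * y) sequentially \<and>
    uniform_limit K (\<lambda>k. deriv (deriv (\<lambda>y. u k (rb k * y) / u0 k))) (\<lambda>y. - 2) sequentially"
proof -
  obtain \<rho> where \<rho>: "0 \<le> \<rho>" "\<rho> < 1" and K: "K \<subseteq> {-\<rho>..\<rho>}"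
    using compact_subset_symmetric_interval[OF assms] .
  show ?thesis
    using uniform_limit_on_subset[OF profile_uniform_limit[OF \<rho>] K]
      uniform_limit_on_subset[OF deriv_profile_uniform_limit[OF \<rho>] K]
      uniform_limit_on_subset[OF deriv2_profile_uniform_limit[OF \<rho>] K] by blast
qed

end

theorem mainTheorem12:
  fixes Q dQ :: "real \<Rightarrow> real" and A m S :: real
    and u0 :: "nat \<Rightarrow> real" and u :: "nat \<Rightarrow> real \<Rightarrow> real" and rb :: "nat \<Rightarrow> real"
  assumes "H_EL Q dQ A m" and "H_R Q" and "e_star_infinite Q"
    and "-S \<in> {0<..}" and "(Q \<longlongrightarrow> -S) at_top"
    and "((\<lambda>s. s * dQ s) \<longlongrightarrow> 0) at_top"
    and "\<And>k. u0 k \<in> setA Q" and "filterlim u0 at_top sequentially"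
    and "\<And>k. solves_P Q dQ (u0 k) (u k) (rb k)"
  shows "filterlim (\<lambda>k. mass (u k) (rb k)) at_top sequentially \<and>
    (\<lambda>k. u0 k ^ 4) \<sim>[sequentially] (\<lambda>k. 9 * \<bar>S\<bar> / 32 * mass (u k) (rb k) ^ 2) \<and>
    (\<lambda>k. rb k ^ 4) \<sim>[sequentially] (\<lambda>k. 9 / (8 * \<bar>S\<bar>) * mass (u k) (rb k) ^ 2) \<and>
    (\<forall>K. compact K \<and> K \<subseteq> {-1<..<1} \<longrightarrow>
           uniform_limit K (\<lambda>k y. u k (rb k * y) / u0 k) (\<lambda>y. 1 - y\<^sup>2) sequentially \<and>
           uniform_limit K (\<lambda>k. deriv (\<lambda>y. u k (rb k * y) / u0 k)) (\<lambda>y. - 2 * y) sequentially \<and>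
           uniform_limit K (\<lambda>k. deriv (deriv (\<lambda>y. u k (rb k * y) / u0 k))) (\<lambda>y. - 2) sequentially)"
proof -
  have S: "-S > 0" "\<bar>S\<bar> = -S" using assms(4) by auto
  have Q_pos: "\<And>t. t > 0 \<Longrightarrow> Q t > 0"
    using setA_sequence_Q_pos[OF assms(7,8,5) S(1)] .
  obtain q where q: "q > 0" "\<And>t. t > 0 \<Longrightarrow> q \<le> Q t"
    using H_EL_Q_lower_bound[OF assms(1,5) S(1) Q_pos] by blast
  have D: "\<forall>x>0. (Q has_real_derivative dQ x) (at x)"
    using assms(1) unfolding H_EL_def by blast
  interpret large_amplitude_family Q dQ "-S" q u0 u rb
    by unfold_locales (use D S(1) assms(5-9) q in auto)
  show ?thesis
    unfolding S(2)
    using mass_tendsto_at_top u0_pow4_asymp_equiv rb_pow4_asymp_equiv profile_C2_convergence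
    by blast
qed

end
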